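(* Let $k\geq1$, $\triangle_2=\mathrm{Conv}\{(\pm2,0),(0,\pm1)\}\subset\mathbb{R}^2$, $W_2\cong\mathbb{Z}/2\times\mathbb{Z}/2$ the group generated by $(x,y)\mapsto(-x,y)$ and $(x,y)\mapsto(x,-y)$, $b=|\partial(k\triangle_2)\cap\mathbb{Z}^2|$, and for $0\le i\le k-1$ let $T_i=\mathrm{Conv}\{(0,0),a_i,a_{i+1}\}$ with $a_i=(2i,k-i)$. Let $\delta_k:k\triangle_2\cap\mathbb{Z}^2\to\mathbb{R}$ be a fixed function with $\sum_p\delta_k(p)=1$, and let $g\in\mathrm{PL}(\triangle_2;k)^{W_2}$ satisfy (a) $\sum_{p\in k\triangle_2\cap\mathbb{Z}^2}g(p)-\int_{k\triangle_2}g\,dV\le\frac12\sum_{p\in\partial(k\triangle_2)\cap\mathbb{Z}^2}g(p)+\sum_{p\in k\triangle_2\cap\mathbb{Z}^2}\delta_k(p)g(p)$, with equality only if $g$ is constant; and (b) $\frac{(b+2)|W_2|}{2b\,\mathrm{vol}(T_0)}\sum_{i=0}^{k-1}\int_{T_i}g\geq\frac12\sum_{p\in\partial(k\triangle_2)\cap\mathbb{Z}^2}g(p)+\sum_{p\in k\triangle_2\cap\mathbb{Z}^2}\delta_k(p)g(p)$, with equality only if $g$ is constant. Then $$\frac{1}{\mathrm{vol}(k\triangle_2)}\int_{k\triangle_2}g\,dV\geq\frac{1}{|k\triangle_2\cap\mathbb{Z}^2|}\sum_{p\in k\triangle_2\cap\mathbb{Z}^2}g(p),$$ with equality if and only if $g$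 is constant.
   Context: $\mathrm{PL}(\triangle;k)$: for $\phi:k\triangle\cap\mathbb{Z}^2\to\mathbb{R}$, let $f_\phi(x)=\max\{t:(x,t)\in\mathrm{graph}_\phi\}$ on $k\triangle$, where $\mathrm{graph}_\phi$ is the convex hull of $\bigcup_{x\in k\triangle\cap\mathbb{Z}^2}\{(x,t):t\le\phi(x)\}$; $\mathrm{PL}(\triangle;k)$ is the set of all such $f_\phi$, and $\mathrm{PL}(\triangle;k)^{W}$ the $W$-invariant ones. $\mathrm{vol}$ is Lebesgue area. *)

theory Defs
  imports "HOL-Analysis.Analysis"
begin

definition tri2 :: "(real \<times> real) set" where
  "tri2 = convex hull {(2,0), (-2,0), (0,1), (0,-1)}"

definition ktri2 :: "nat \<Rightarrow> (real \<times> real) set" where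
  "ktri2 k = (\<lambda>x. real k *\<^sub>R x) ` tri2"

definition latt :: "(real \<times> real) set \<Rightarrow> (real \<times> real) set" where
  "latt S = {p \<in> S. fst p \<in> \<int> \<and> snd p \<in> \<int>}"

definition graph_phi :: "(real \<times> real) set \<Rightarrow> (real \<times> real \<Rightarrow> real) \<Rightarrow> ((real \<times> real) \<times> real) set" where
  "graph_phi P \<phi> = convex hull (\<Union>p\<in>latt P. {(p, t) | t. t \<le> \<phi> p})"

definition f_phi :: "(real \<times> real) set \<Rightarrow> (real \<times> real \<Rightarrow> real) \<Rightarrow> real \<times> real \<Rightarrow> real" where
  "f_phi P \<phi> x = Sup {t. (x, t) \<in> graph_phi P \<phi>}"

definition in_PL :: "nat \<Rightarrow> (real \<times> real \<Rightarrow> real) \<Rightarrow> bool" where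
  "in_PL k g \<longleftrightarrow> (\<exists>\<phi>. \<forall>x\<in>ktri2 k. g x = f_phi (ktri2 k) \<phi> x)"

definition W2_invariant :: "nat \<Rightarrow> (real \<times> real \<Rightarrow> real) \<Rightarrow> bool" where
  "W2_invariant k g \<longleftrightarrow>
     (\<forall>x y. (x, y) \<in> ktri2 k \<longrightarrow> g (-x, y) = g (x, y) \<and> g (x, -y) = g (x, y))"

definition is_const_on :: "(real \<times> real) set \<Rightarrow> (real \<times> real \<Rightarrow> real) \<Rightarrow> bool" where
  "is_const_on S g \<longleftrightarrow> (\<exists>c. \<forall>x\<in>S. g x = c)"

definition avec :: "nat \<Rightarrow> nat \<Rightarrow> real \<times> real" where
  "avec k i = (2 * real i, real k - real i)"

definition Tsimp :: "nat \<Rightarrow> nat \<Rightarrow> (real \<times> real) set" where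
  "Tsimp k i = convex hull {(0,0), avec k i, avec k (Suc i)}"

definition bcount :: "nat \<Rightarrow> nat" where
  "bcount k = card (latt (frontier (ktri2 k)))"

end

theory Submission
  imports Defs
begin

(*
  Hypotheses (a) and (b) sandwich the boundary term B:  S - I <= B <= c * I,  where S is the
  lattice sum and I the integral of g over k*tri2.  The constant c is computed from the geometry
  of the rhombus: it has b = 4k boundary lattice points, vol(T_0) = k, and since the triangles T_i
  tile the first quadrant, W_2-invariance gives I = 4 * sum_i int_{T_i} g.  Hence c = (N - A) / A
  with A = vol(k*tri2) = 4k^2 and N = 4k^2 + 2k + 1 lattice points, so S <= (N / A) * I, with
  equality only if (a) is an equality.  Integrability of g is a consequence of its concavity.
*)

section \<open>Reflections and areas in the plane\<close>

lemma involution_image_eq_vimage: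
  assumes "\<And>x. R (R x) = x"
  shows "R ` S = R -` S"
  using assms by (auto simp: image_iff) (metis assms)

lemma has_integral_involution:
  fixes f :: "'a::euclidean_space \<Rightarrow> 'b::banach" and R :: "'a \<Rightarrow> 'a"
  assumes RR: "\<And>x. R (R x) = x" and cont: "\<And>x. continuous (at x) R"
    and box: "\<And>u v. \<exists>w z. R ` cbox u v = cbox w z"
    and content: "\<And>u v. measure lborel (R ` cbox u v) = measure lborel (cbox u v)"
    and f: "(f has_integral i) S" and "bounded S"
  shows "((\<lambda>x. f (R x)) has_integral i) (R ` S)"
proof -
  obtain a b where Sab: "S \<subseteq> cbox a b"
    using \<open>bounded S\<close> bounded_subset_cbox_symmetric by blast
  have "((\<lambda>x. if x \<in> S then f x else 0) has_integral i) (cbox a b)"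
    using f Sab by (simp only: has_integral_restrict)
  from has_integral_twiddle[of 1 R R, OF _ RR RR cont box box _ this]
  have "((\<lambda>x. if x \<in> R ` S then f (R x) else 0) has_integral i) (R ` cbox a b)"
    using content by (simp add: involution_image_eq_vimage[OF RR])
  moreover have "R ` S \<subseteq> R ` cbox a b" using Sab by (rule image_mono)
  ultimately show ?thesis by (simp only: has_integral_restrict)
qed

lemma has_integral_point_reflection:
  fixes f :: "'a::euclidean_space \<Rightarrow> 'b::banach"
  assumes "(f has_integral i) S" and "bounded S"
  shows "((\<lambda>x. f (c - x)) has_integral i) ((\<lambda>x. c - x) ` S)"
proof (rule has_integral_involution[OF _ _ _ _ assms])
  have affine: "(\<lambda>x. c - x) = (\<lambda>x. (-1) *\<^sub>R x + c)" by auto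
  show "\<exists>w z. (\<lambda>x. c - x) ` cbox u v = cbox w z" for u v
    unfolding affine by (rule interval_image_affinity_interval)
  show "measure lborel ((\<lambda>x. c - x) ` cbox u v) = measure lborel (cbox u v)" for u v
    unfolding affine content_image_affinity_cbox by simp
qed (auto intro: continuous_intros)

definition reflect_fst :: "real \<times> real \<Rightarrow> real \<times> real" where
  "reflect_fst p = (- fst p, snd p)"

definition reflect_snd :: "real \<times> real \<Rightarrow> real \<times> real" where
  "reflect_snd p = (fst p, - snd p)"

lemma reflect_fst_involution [simp]: "reflect_fst (reflect_fst p) = p"
  by (simp add: reflect_fst_def)

lemma reflect_snd_involution [simp]: "reflect_snd (reflect_snd p) = p"
  by (simp add: reflect_snd_def)

lemma has_integral_reflect_fst:
  fixes f :: "real \<times> real \<Rightarrow> 'b::banach"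
  assumes "(f has_integral i) S" and "bounded S"
  shows "((\<lambda>x. f (reflect_fst x)) has_integral i) (reflect_fst ` S)"
proof (rule has_integral_involution[OF reflect_fst_involution _ _ _ assms])
  have cbox: "reflect_fst ` cbox (a1, a2) (b1, b2) = cbox (-b1, a2) (-a1, b2)" for a1 a2 b1 b2
    unfolding involution_image_eq_vimage[OF reflect_fst_involution]
    by (auto simp: reflect_fst_def cbox_Pair_eq)
  show "\<exists>w z. reflect_fst ` cbox u v = cbox w z" for u v
    by (cases u, cases v) (simp only: cbox, blast)
  show "measure lborel (reflect_fst ` cbox u v) = measure lborel (cbox u v)" for u v
    by (cases u, cases v) (simp add: cbox content_Pair)
  show "continuous (at x) reflect_fst" for x
    unfolding reflect_fst_def by (intro continuous_intros)
qed

lemma has_integral_reflect_snd: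
  fixes f :: "real \<times> real \<Rightarrow> 'b::banach"
  assumes "(f has_integral i) S" and "bounded S"
  shows "((\<lambda>x. f (reflect_snd x)) has_integral i) (reflect_snd ` S)"
proof (rule has_integral_involution[OF reflect_snd_involution _ _ _ assms])
  have cbox: "reflect_snd ` cbox (a1, a2) (b1, b2) = cbox (a1, -b2) (b1, -a2)" for a1 a2 b1 b2
    unfolding involution_image_eq_vimage[OF reflect_snd_involution]
    by (auto simp: reflect_snd_def cbox_Pair_eq)
  show "\<exists>w z. reflect_snd ` cbox u v = cbox w z" for u v
    by (cases u, cases v) (simp only: cbox, blast)
  show "measure lborel (reflect_snd ` cbox u v) = measure lborel (cbox u v)" for u v
    by (cases u, cases v) (simp add: cbox content_Pair)
  show "continuous (at x) reflect_snd" for x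
    unfolding reflect_snd_def by (intro continuous_intros)
qed

lemma negligible_line:
  assumes "a \<noteq> 0 \<or> b \<noteq> 0"
  shows "negligible {p :: real \<times> real. a * fst p + b * snd p = c}"
proof -
  have "{p :: real \<times> real. a * fst p + b * snd p = c} = {p. (a, b) \<bullet> p = c}"
    by (auto simp: inner_prod_def)
  then show ?thesis
    using negligible_hyperplane[of "(a, b)" c] assms by (simp add: zero_prod_def)
qed

lemma has_integral_one_measure:
  "S \<in> lmeasurable \<Longrightarrow> ((\<lambda>_. 1::real) has_integral measure lebesgue S) S"
  by (metis has_integral_integrable_integral integrable_on_const lmeasure_integral)

lemma has_integral_one_half_box:
  fixes a1 a2 b1 b2 \<alpha> \<beta> :: real
  assumes "a1 \<le> b1" "a2 \<le> b2" "\<alpha> \<noteq> 0 \<or> \<beta> \<noteq> 0"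
  shows "((\<lambda>_. 1::real) has_integral ((b1 - a1) * (b2 - a2) / 2))
           (cbox (a1, a2) (b1, b2) \<inter> {p. \<alpha> * (2 * fst p - a1 - b1) + \<beta> * (2 * snd p - a2 - b2) \<le> 0})"
    (is "(_ has_integral _) ?T")
proof -
  define T' where "T' = cbox (a1, a2) (b1, b2) \<inter> {p. \<alpha> * (2 * fst p - a1 - b1) + \<beta> * (2 * snd p - a2 - b2) \<ge> 0}"
  have "compact ?T"
    by (intro compact_Int_closed compact_cbox closed_Collect_le continuous_intros)
  then have T: "((\<lambda>_. 1::real) has_integral measure lebesgue ?T) ?T"
    by (intro has_integral_one_measure lmeasurable_compact)
  \<comment> \<open>The point reflection through the centre of the box exchanges the two halves.\<close>
  have "(\<lambda>x. (a1 + b1, a2 + b2) - x) ` ?T = T'"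
    by (subst involution_image_eq_vimage) (auto simp: T'_def cbox_Pair_eq algebra_simps)
  with has_integral_point_reflection[OF T compact_imp_bounded[OF \<open>compact ?T\<close>], of "(a1 + b1, a2 + b2)"]
  have T': "((\<lambda>_. 1::real) has_integral measure lebesgue ?T) T'" by simp
  have "negligible {p :: real \<times> real. (2 * \<alpha>) * fst p + (2 * \<beta>) * snd p = \<alpha> * (a1 + b1) + \<beta> * (a2 + b2)}"
    using assms(3) by (intro negligible_line) auto
  then have "negligible (?T \<inter> T')"
    by (rule negligible_subset) (auto simp: T'_def algebra_simps)
  moreover have "?T \<union> T' = cbox (a1, a2) (b1, b2)"
    by (auto simp: T'_def)
  ultimately have "((\<lambda>_. 1::real) has_integral (measure lebesgue ?T + measure lebesgue ?T)) (cbox (a1, a2) (b1, b2))"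
    using has_integral_Un[OF T T'] by metis
  moreover have "((\<lambda>_. 1::real) has_integral ((b1 - a1) * (b2 - a2))) (cbox (a1, a2) (b1, b2))"
    using has_integral_const[of "1::real" "(a1, a2)" "(b1, b2)"] assms by (simp add: content_Pair)
  ultimately have "measure lebesgue ?T + measure lebesgue ?T = (b1 - a1) * (b2 - a2)"
    by (rule has_integral_unique)
  then have "measure lebesgue ?T = (b1 - a1) * (b2 - a2) / 2"
    by linarith
  with T show ?thesis
    by (simp only:)
qed

section \<open>The rhombus \<open>k\<triangle>\<^sub>2\<close> and its lattice points\<close>

lemma rhombus_eq_halfspaces:
  "{p :: real \<times> real. \<bar>fst p\<bar> + 2 * \<bar>snd p\<bar> \<le> r} =
     {p. (1, 2) \<bullet> p \<le> r} \<inter> {p. (-1, 2) \<bullet> p \<le> r} \<inter> {p. (1, -2) \<bullet> p \<le> r} \<inter> {p. (-1, -2) \<bullet> p \<le> r}"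
  by (auto simp: inner_prod_def abs_le_iff)

lemma convex_hull_rhombus:
  assumes "c \<ge> 0"
  shows "convex hull {(2 * c, 0), (-2 * c, 0), (0, c), (0, -c)} = {p :: real \<times> real. \<bar>fst p\<bar> + 2 * \<bar>snd p\<bar> \<le> 2 * c}"
proof
  have "convex {p :: real \<times> real. \<bar>fst p\<bar> + 2 * \<bar>snd p\<bar> \<le> 2 * c}"
    unfolding rhombus_eq_halfspaces by (intro convex_Int convex_halfspace_le)
  then show "convex hull {(2 * c, 0), (-2 * c, 0), (0, c), (0, -c)} \<subseteq> {p. \<bar>fst p\<bar> + 2 * \<bar>snd p\<bar> \<le> 2 * c}"
    using assms by (intro hull_minimal) auto
next
  show "{p. \<bar>fst p\<bar> + 2 * \<bar>snd p\<bar> \<le> 2 * c} \<subseteq> convex hull {(2 * c, 0), (-2 * c, 0), (0, c), (0, -c)}"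
  proof (clarify)
    fix x y :: real
    assume xy: "\<bar>fst (x, y)\<bar> + 2 * \<bar>snd (x, y)\<bar> \<le> 2 * c"
    show "(x, y) \<in> convex hull {(2 * c, 0), (-2 * c, 0), (0, c), (0, -c)}"
    proof (cases "c = 0")
      case True
      with xy have "(x, y) = (0, c)" by auto
      then show ?thesis by (simp add: hull_inc)
    next
      case False
      with assms have "c > 0" by simp
      \<comment> \<open>\<open>(x, y)\<close> lies in the half of the rhombus on the side of the vertex \<open>(0, \<sigma> c)\<close>.\<close>
      define \<sigma> :: real where "\<sigma> = (if y \<ge> 0 then 1 else -1)"
      define u where "u = (2 * c - 2 * \<bar>y\<bar> + x) / (4 * c)"
      define v where "v = \<bar>y\<bar> / c"
      define w where "w = (2 * c - 2 * \<bar>y\<bar> - x) / (4 * c)"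
      have "0 \<le> u" "0 \<le> v" "0 \<le> w" "u + v + w = 1"
        using xy \<open>c > 0\<close> by (auto simp: u_def v_def w_def field_simps)
      moreover have "(x, y) = u *\<^sub>R (2 * c, 0) + v *\<^sub>R (0, \<sigma> * c) + w *\<^sub>R (-2 * c, 0)"
        using \<open>c > 0\<close> by (auto simp: u_def v_def w_def \<sigma>_def field_simps)
      ultimately have "(x, y) \<in> convex hull {(2 * c, 0), (0, \<sigma> * c), (-2 * c, 0)}"
        unfolding convex_hull_3 by blast
      also have "\<dots> \<subseteq> convex hull {(2 * c, 0), (-2 * c, 0), (0, c), (0, -c)}"
        by (rule hull_mono) (auto simp: \<sigma>_def)
      finally show ?thesis .
    qed
  qed
qed

lemma ktri2_eq_convex_hull:
  "ktri2 k = convex hull {(2 * real k, 0), (-2 * real k, 0), (0, real k), (0, - real k)}"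
proof -
  have "ktri2 k = convex hull ((\<lambda>x. real k *\<^sub>R x) ` {(2, 0), (-2, 0), (0, 1), (0, -1)})"
    unfolding ktri2_def tri2_def by (rule convex_hull_scaling[symmetric])
  also have "(\<lambda>x. real k *\<^sub>R x) ` {(2, 0), (-2, 0), (0, 1), (0, -1)} =
      {(2 * real k, 0), (-2 * real k, 0), (0, real k), (0, - real k)}"
    by auto
  finally show ?thesis .
qed

lemma ktri2_eq: "ktri2 k = {p. \<bar>fst p\<bar> + 2 * \<bar>snd p\<bar> \<le> 2 * real k}"
  unfolding ktri2_eq_convex_hull by (rule convex_hull_rhombus) simp

lemma convex_ktri2: "convex (ktri2 k)"
  unfolding ktri2_eq_convex_hull by (rule convex_convex_hull)

lemma compact_ktri2: "compact (ktri2 k)"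
  unfolding ktri2_eq_convex_hull by (intro compact_convex_hull) auto

lemma frontier_ktri2: "frontier (ktri2 k) = {p. \<bar>fst p\<bar> + 2 * \<bar>snd p\<bar> = 2 * real k}"
proof -
  let ?r = "2 * real k"
  have "interior (ktri2 k) =
      {p. (1, 2) \<bullet> p < ?r} \<inter> {p. (-1, 2) \<bullet> p < ?r} \<inter> {p. (1, -2) \<bullet> p < ?r} \<inter> {p. (-1, -2) \<bullet> p < ?r}"
    unfolding ktri2_eq rhombus_eq_halfspaces interior_Int by (simp add: zero_prod_def)
  also have "\<dots> = {p. \<bar>fst p\<bar> + 2 * \<bar>snd p\<bar> < ?r}"
    by (auto simp: inner_prod_def abs_less_iff)
  finally show ?thesis
    using compact_imp_closed[OF compact_ktri2]
    by (auto simp: frontier_def ktri2_eq)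
qed

lemma latt_eq_image_Ints:
  "latt S = (\<lambda>(a, b). (real_of_int a, real_of_int b)) ` {(a, b). (real_of_int a, real_of_int b) \<in> S}"
  by (force simp: latt_def elim!: Ints_cases)

lemma inj_of_int_pair: "inj (\<lambda>(a, b). (real_of_int a, real_of_int b))"
  by (auto simp: inj_def)

lemma card_latt: "card (latt S) = card {(a, b). (real_of_int a, real_of_int b) \<in> S}"
  unfolding latt_eq_image_Ints by (rule card_image) (rule inj_on_subset[OF inj_of_int_pair], simp)

lemma card_pairs_by_snd:
  assumes "finite B" and "\<And>b. finite {a. P a b}" and "\<And>a b. P a b \<Longrightarrow> b \<in> B"
  shows "card {(a, b). P a b} = (\<Sum>b\<in>B. card {a. P a b})"
proof -
  have "{(a, b). P a b} = prod.swap ` (SIGMA b:B. {a. P a b})"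
    using assms(3) by force
  then show ?thesis
    using assms(1,2) by (simp add: card_image)
qed

lemma sum_abs_int_symmetric: "(\<Sum>b\<in>{-int n..int n}. \<bar>b\<bar>) = int n * (int n + 1)"
proof (induction n)
  case (Suc n)
  have "{-int (Suc n)..int (Suc n)} = insert (- int (Suc n)) (insert (int (Suc n)) {-int n..int n})"
    by auto
  with Suc show ?case by (simp add: algebra_simps)
qed simp

lemma of_int_pair_mem_ktri2:
  "(real_of_int a, real_of_int b) \<in> ktri2 k \<longleftrightarrow> \<bar>a\<bar> + 2 * \<bar>b\<bar> \<le> 2 * int k"
proof -
  have "(real_of_int a, real_of_int b) \<in> ktri2 k \<longleftrightarrow> real_of_int (\<bar>a\<bar> + 2 * \<bar>b\<bar>) \<le> real_of_int (2 * int k)"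
    by (simp add: ktri2_eq)
  then show ?thesis by linarith
qed

lemma of_int_pair_mem_frontier_ktri2:
  "(real_of_int a, real_of_int b) \<in> frontier (ktri2 k) \<longleftrightarrow> \<bar>a\<bar> + 2 * \<bar>b\<bar> = 2 * int k"
proof -
  have "(real_of_int a, real_of_int b) \<in> frontier (ktri2 k) \<longleftrightarrow> real_of_int (\<bar>a\<bar> + 2 * \<bar>b\<bar>) = real_of_int (2 * int k)"
    by (simp add: frontier_ktri2)
  then show ?thesis by linarith
qed

lemma finite_int_rhombus_fibre: "finite {a :: int. \<bar>a\<bar> + 2 * \<bar>b\<bar> \<le> c}"
  by (rule finite_subset[of _ "{-c..c}"]) auto

lemma card_latt_ktri2: "card (latt (ktri2 k)) = 4 * k^2 + 2 * k + 1"
proof -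
  have "card (latt (ktri2 k)) = card {(a, b). \<bar>a\<bar> + 2 * \<bar>b\<bar> \<le> 2 * int k}"
    unfolding card_latt of_int_pair_mem_ktri2 ..
  also have "\<dots> = (\<Sum>b\<in>{-int k..int k}. card {a. \<bar>a\<bar> + 2 * \<bar>b\<bar> \<le> 2 * int k})"
    by (rule card_pairs_by_snd) (auto simp: finite_int_rhombus_fibre)
  also have "\<dots> = (\<Sum>b\<in>{-int k..int k}. nat (4 * int k + 1 - 4 * \<bar>b\<bar>))"
  proof (rule sum.cong)
    fix b assume "b \<in> {-int k..int k}"
    then have "{a. \<bar>a\<bar> + 2 * \<bar>b\<bar> \<le> 2 * int k} = {-(2 * int k - 2 * \<bar>b\<bar>)..2 * int k - 2 * \<bar>b\<bar>}"
      by auto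
    then show "card {a. \<bar>a\<bar> + 2 * \<bar>b\<bar> \<le> 2 * int k} = nat (4 * int k + 1 - 4 * \<bar>b\<bar>)"
      by simp
  qed simp
  also have "int \<dots> = (\<Sum>b\<in>{-int k..int k}. 4 * int k + 1 - 4 * \<bar>b\<bar>)"
    unfolding of_nat_sum by (rule sum.cong) auto
  also have "\<dots> = (2 * int k + 1) * (4 * int k + 1) - 4 * (\<Sum>b\<in>{-int k..int k}. \<bar>b\<bar>)"
    by (simp add: sum_subtractf sum.distrib sum_distrib_left)
  also have "\<dots> = int (4 * k^2 + 2 * k + 1)"
    by (simp add: sum_abs_int_symmetric algebra_simps power2_eq_square)
  finally show ?thesis by linarith
qed

lemma finite_latt_ktri2: "finite (latt (ktri2 k))"
  using card_latt_ktri2[of k] card.infinite by fastforce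

lemma bcount_eq:
  assumes "k \<ge> 1"
  shows "bcount k = 4 * k"
proof -
  have fibre: "finite {a. \<bar>a\<bar> + 2 * \<bar>b\<bar> = 2 * int k}" for b
    using finite_int_rhombus_fibre[of b "2 * int k"] by (rule rev_finite_subset) auto
  have "bcount k = card {(a, b). \<bar>a\<bar> + 2 * \<bar>b\<bar> = 2 * int k}"
    unfolding bcount_def card_latt of_int_pair_mem_frontier_ktri2 ..
  also have "\<dots> = (\<Sum>b\<in>{-int k..int k}. card {a. \<bar>a\<bar> + 2 * \<bar>b\<bar> = 2 * int k})"
    using fibre by (intro card_pairs_by_snd) auto
  also have "\<dots> = (\<Sum>b\<in>{-int k..int k}. if \<bar>b\<bar> = int k then 1 else 2)"
  proof (rule sum.cong)
    fix b assume "b \<in> {-int k..int k}"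
    then have "{a. \<bar>a\<bar> + 2 * \<bar>b\<bar> = 2 * int k} = {2 * int k - 2 * \<bar>b\<bar>, -(2 * int k - 2 * \<bar>b\<bar>)}"
      by auto
    then show "card {a. \<bar>a\<bar> + 2 * \<bar>b\<bar> = 2 * int k} = (if \<bar>b\<bar> = int k then 1 else 2)"
      by simp
  qed simp
  also have "{-int k..int k} = insert (- int k) (insert (int k) {-(int k - 1)..int k - 1})"
    using assms by auto
  also have "(\<Sum>b\<in>\<dots>. if \<bar>b\<bar> = int k then 1 else 2) = 2 + (\<Sum>b\<in>{-(int k - 1)..int k - 1}. 2::nat)"
  proof -
    have "(\<Sum>b\<in>{-(int k - 1)..int k - 1}. if \<bar>b\<bar> = int k then 1 else 2) = (\<Sum>b\<in>{-(int k - 1)..int k - 1}. 2::nat)"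
      by (rule sum.cong) auto
    with assms show ?thesis by simp
  qed
  also have "\<dots> = 4 * k"
    using assms by simp
  finally show ?thesis .
qed

section \<open>Symmetry and the fan of triangles \<open>T\<^sub>i\<close>\<close>

lemma has_integral_Un_involution_image:
  fixes h :: "'a::euclidean_space \<Rightarrow> real"
  assumes RR: "\<And>x. R (R x) = x" and hR: "\<And>x. x \<in> S \<Longrightarrow> h (R x) = h x"
    and h: "(h has_integral J) S" and hR_int: "((\<lambda>x. h (R x)) has_integral J) (R ` S)"
    and "negligible (S \<inter> R ` S)"
  shows "(h has_integral (2 * J)) (S \<union> R ` S)"
proof -
  have "(h has_integral J) (R ` S)"
    using hR_int by (rule has_integral_eq[rotated]) (auto simp: RR hR)
  from has_integral_Un[OF h this \<open>negligible _\<close>] show ?thesis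
    by (simp only: mult_2)
qed

definition quadrant :: "nat \<Rightarrow> (real \<times> real) set" where
  "quadrant k = ktri2 k \<inter> {p. 0 \<le> fst p \<and> 0 \<le> snd p}"

lemma mem_quadrant: "p \<in> quadrant k \<longleftrightarrow> 0 \<le> fst p \<and> 0 \<le> snd p \<and> fst p + 2 * snd p \<le> 2 * real k"
  unfolding quadrant_def ktri2_eq by auto

lemma has_integral_ktri2_quadrant:
  fixes h :: "real \<times> real \<Rightarrow> real"
  assumes "W2_invariant k h" and "(h has_integral J) (quadrant k)"
  shows "(h has_integral (4 * J)) (ktri2 k)"
proof -
  define H where "H = ktri2 k \<inter> {p. 0 \<le> fst p}"
  have bounded: "bounded S" if "S \<subseteq> ktri2 k" for S
    using bounded_subset[OF compact_imp_bounded[OF compact_ktri2] that] .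
  have inv_fst: "h (reflect_fst p) = h p" and inv_snd: "h (reflect_snd p) = h p" if "p \<in> ktri2 k" for p
    using assms(1) that by (cases p; simp add: W2_invariant_def reflect_fst_def reflect_snd_def)+
  have quadrant_snd: "quadrant k \<union> reflect_snd ` quadrant k = H"
    and neg_snd: "quadrant k \<inter> reflect_snd ` quadrant k \<subseteq> {p. 0 * fst p + 1 * snd p = 0}"
    unfolding involution_image_eq_vimage[OF reflect_snd_involution]
    by (auto simp: H_def quadrant_def ktri2_eq reflect_snd_def)
  have H_fst: "H \<union> reflect_fst ` H = ktri2 k"
    and neg_fst: "H \<inter> reflect_fst ` H \<subseteq> {p. 1 * fst p + 0 * snd p = 0}"
    unfolding involution_image_eq_vimage[OF reflect_fst_involution]
    by (auto simp: H_def ktri2_eq reflect_fst_def)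
  have "(h has_integral (2 * J)) H"
    unfolding quadrant_snd[symmetric]
  proof (rule has_integral_Un_involution_image[OF reflect_snd_involution _ assms(2)])
    show "((\<lambda>x. h (reflect_snd x)) has_integral J) (reflect_snd ` quadrant k)"
      using assms(2) bounded by (rule has_integral_reflect_snd) (auto simp: quadrant_def)
    show "negligible (quadrant k \<inter> reflect_snd ` quadrant k)"
      using neg_snd by (rule negligible_subset[OF negligible_line, rotated]) simp
  qed (auto simp: quadrant_def inv_snd)
  then have "(h has_integral (2 * (2 * J))) (H \<union> reflect_fst ` H)"
  proof (rule has_integral_Un_involution_image[OF reflect_fst_involution, rotated])
    show "((\<lambda>x. h (reflect_fst x)) has_integral (2 * J)) (reflect_fst ` H)"
      using \<open>(h has_integral _) H\<close> bounded by (rule has_integral_reflect_fst) (auto simp: H_def)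
    show "negligible (H \<inter> reflect_fst ` H)"
      using neg_fst by (rule negligible_subset[OF negligible_line, rotated]) simp
  qed (auto simp: H_def inv_fst)
  then show ?thesis
    unfolding H_fst by simp
qed

lemma has_integral_one_quadrant: "((\<lambda>_. 1::real) has_integral (real k)\<^sup>2) (quadrant k)"
proof -
  have "quadrant k = cbox (0, 0) (2 * real k, real k) \<inter>
      {p. 1 * (2 * fst p - 0 - 2 * real k) + 2 * (2 * snd p - 0 - real k) \<le> 0}"
    by (auto simp: mem_quadrant cbox_Pair_eq)
  also have "((\<lambda>_. 1::real) has_integral ((2 * real k - 0) * (real k - 0) / 2)) \<dots>"
    by (rule has_integral_one_half_box) auto
  finally show ?thesis by (simp add: power2_eq_square)
qed

lemma measure_ktri2: "measure lebesgue (ktri2 k) = 4 * (real k)\<^sup>2"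
proof -
  have "((\<lambda>_. 1::real) has_integral (4 * (real k)\<^sup>2)) (ktri2 k)"
    using has_integral_one_quadrant by (intro has_integral_ktri2_quadrant) (auto simp: W2_invariant_def)
  with has_integral_one_measure[OF lmeasurable_compact[OF compact_ktri2]] show ?thesis
    by (rule has_integral_unique)
qed

lemma mem_Tsimp:
  assumes "k > 0"
  shows "p \<in> Tsimp k i \<longleftrightarrow> fst p + 2 * snd p \<le> 2 * real k
      \<and> real i * (fst p + 2 * snd p) \<le> real k * fst p \<and> real k * fst p \<le> (real i + 1) * (fst p + 2 * snd p)"
proof -
  define K where "K = real k"
  define I where "I = real i"
  have "K > 0" using assms by (simp add: K_def)
  have vertices: "avec k i = (2 * I, K - I)" "avec k (Suc i) = (2 * I + 2, K - I - 1)"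
    by (simp_all add: avec_def K_def I_def)
  \<comment> \<open>In barycentric coordinates \<open>(u, v, w)\<close> with respect to \<open>0, a\<^sub>i, a\<^sub>i\<^sub>+\<^sub>1\<close> one has
      \<open>x + 2y = 2K(v + w)\<close>, \<open>Kx - I(x + 2y) = 2Kw\<close> and \<open>(I + 1)(x + 2y) - Kx = 2Kv\<close>.\<close>
  have "(x, y) \<in> convex hull {(0, 0), (2 * I, K - I), (2 * I + 2, K - I - 1)}
        \<longleftrightarrow> x + 2 * y \<le> 2 * K \<and> I * (x + 2 * y) \<le> K * x \<and> K * x \<le> (I + 1) * (x + 2 * y)" for x y
  proof
    assume "(x, y) \<in> convex hull {(0, 0), (2 * I, K - I), (2 * I + 2, K - I - 1)}"
    then obtain u v w where uvw: "0 \<le> u" "0 \<le> v" "0 \<le> w" "u + v + w = 1"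
      and x: "x = 2 * I * v + (2 * I + 2) * w" and y: "y = (K - I) * v + (K - I - 1) * w"
      unfolding convex_hull_3 by auto
    have "x + 2 * y = 2 * K * (v + w)" "K * x - I * (x + 2 * y) = 2 * K * w"
      "(I + 1) * (x + 2 * y) - K * x = 2 * K * v"
      unfolding x y by (simp_all add: algebra_simps)
    moreover have "2 * K * (v + w) \<le> 2 * K" "0 \<le> 2 * K * w" "0 \<le> 2 * K * v"
      using uvw \<open>K > 0\<close> by simp_all
    ultimately show "x + 2 * y \<le> 2 * K \<and> I * (x + 2 * y) \<le> K * x \<and> K * x \<le> (I + 1) * (x + 2 * y)"
      by linarith
  next
    assume h: "x + 2 * y \<le> 2 * K \<and> I * (x + 2 * y) \<le> K * x \<and> K * x \<le> (I + 1) * (x + 2 * y)"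
    define u where "u = 1 - (x + 2 * y) / (2 * K)"
    define v where "v = ((I + 1) * (x + 2 * y) - K * x) / (2 * K)"
    define w where "w = (K * x - I * (x + 2 * y)) / (2 * K)"
    have "0 \<le> u \<and> 0 \<le> v \<and> 0 \<le> w \<and> u + v + w = 1 \<and>
        (x, y) = u *\<^sub>R (0, 0) + v *\<^sub>R (2 * I, K - I) + w *\<^sub>R (2 * I + 2, K - I - 1)"
      using h \<open>K > 0\<close> by (simp add: u_def v_def w_def field_simps)
    then show "(x, y) \<in> convex hull {(0, 0), (2 * I, K - I), (2 * I + 2, K - I - 1)}"
      unfolding convex_hull_3 by blast
  qed
  from this[of "fst p" "snd p"] show ?thesis
    unfolding Tsimp_def vertices by (simp add: K_def I_def)
qed

lemma nonneg_if_between_multiples: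
  fixes s :: real
  assumes "c * s \<le> z" "z \<le> (c + 1) * s"
  shows "0 \<le> s"
  using assms by (simp add: distrib_right)

lemma obtain_unit_interval_index:
  assumes "0 \<le> t" "t \<le> real k" "k > 0"
  obtains i where "i < k" "real i \<le> t" "t \<le> real i + 1"
proof
  define i where "i = min (nat \<lfloor>t\<rfloor>) (k - 1)"
  show "i < k" "real i \<le> t" "t \<le> real i + 1"
    using assms by (auto simp: i_def min_def of_nat_diff) linarith+
qed

lemma quadrant_eq_Union_Tsimp:
  assumes "k > 0"
  shows "quadrant k = (\<Union>i<k. Tsimp k i)"
proof (rule set_eqI)
  fix p :: "real \<times> real"
  define K s where "K = real k" and "s = fst p + 2 * snd p"
  have "K > 0" using assms by (simp add: K_def)
  have Tsimp: "p \<in> Tsimp k i \<longleftrightarrow> s \<le> 2 * K \<and> real i * s \<le> K * fst p \<and> K * fst p \<le> (real i + 1) * s" for i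
    using mem_Tsimp[OF assms] by (simp add: K_def s_def)
  show "p \<in> quadrant k \<longleftrightarrow> p \<in> (\<Union>i<k. Tsimp k i)"
  proof
    assume "p \<in> quadrant k"
    then have "0 \<le> fst p" "0 \<le> snd p" "s \<le> 2 * K"
      by (simp_all add: mem_quadrant K_def s_def)
    show "p \<in> (\<Union>i<k. Tsimp k i)"
    proof (cases "s = 0")
      case True
      with \<open>0 \<le> fst p\<close> \<open>0 \<le> snd p\<close> have "fst p = 0" by (simp add: s_def)
      with True \<open>K > 0\<close> have "p \<in> Tsimp k 0" by (simp add: Tsimp)
      with assms show ?thesis by blast
    next
      case False
      with \<open>0 \<le> fst p\<close> \<open>0 \<le> snd p\<close> have "s > 0" by (simp add: s_def)
      \<comment> \<open>\<open>p\<close> lies in the triangle selected by the slope parameter \<open>K x / (x + 2 y)\<close>.\<close>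
      define t where "t = K * fst p / s"
      have "0 \<le> t" "t \<le> K"
        using \<open>s > 0\<close> \<open>K > 0\<close> \<open>0 \<le> fst p\<close> \<open>0 \<le> snd p\<close> by (auto simp: t_def s_def field_simps)
      then obtain i where "i < k" "real i \<le> t" "t \<le> real i + 1"
        using assms by (elim obtain_unit_interval_index) (simp_all add: K_def)
      with \<open>s > 0\<close> have "real i * s \<le> K * fst p" "K * fst p \<le> (real i + 1) * s"
        by (simp_all add: t_def field_simps)
      with \<open>s \<le> 2 * K\<close> \<open>i < k\<close> show ?thesis by (auto simp: Tsimp)
    qed
  next
    assume "p \<in> (\<Union>i<k. Tsimp k i)"
    then obtain i where "i < k" "s \<le> 2 * K" "real i * s \<le> K * fst p" "K * fst p \<le> (real i + 1) * s"
      by (auto simp: Tsimp)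
    moreover from this have "0 \<le> s"
      using nonneg_if_between_multiples by blast
    moreover from calculation have "(real i + 1) * s \<le> K * s" "0 \<le> real i * s"
      by (simp_all add: mult_right_mono K_def)
    ultimately have "0 \<le> K * fst p" "K * fst p \<le> K * s"
      by linarith+
    with \<open>K > 0\<close> \<open>s \<le> 2 * K\<close> show "p \<in> quadrant k"
      by (simp add: mem_quadrant zero_le_mult_iff K_def s_def)
  qed
qed

lemma negligible_Tsimp_Int:
  assumes "k > 0" and "i < j"
  shows "negligible (Tsimp k i \<inter> Tsimp k j)"
proof -
  have "Tsimp k i \<inter> Tsimp k j \<subseteq> {p. (real k - (real i + 1)) * fst p + (- 2 * (real i + 1)) * snd p = 0}"
  proof
    fix p assume "p \<in> Tsimp k i \<inter> Tsimp k j"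
    then have i: "real k * fst p \<le> (real i + 1) * (fst p + 2 * snd p)"
      and j: "real j * (fst p + 2 * snd p) \<le> real k * fst p" "real k * fst p \<le> (real j + 1) * (fst p + 2 * snd p)"
      using mem_Tsimp[OF assms(1)] by auto
    have "(real i + 1) * (fst p + 2 * snd p) \<le> real j * (fst p + 2 * snd p)"
      using nonneg_if_between_multiples[OF j] assms(2) by (intro mult_right_mono) simp_all
    with i j have "real k * fst p = (real i + 1) * (fst p + 2 * snd p)"
      by linarith
    then show "p \<in> {p. (real k - (real i + 1)) * fst p + (- 2 * (real i + 1)) * snd p = 0}"
      by (simp add: algebra_simps)
  qed
  then show ?thesis
    by (rule negligible_subset[OF negligible_line, rotated]) simp
qed

lemma has_integral_quadrant_sum_Tsimp:
  fixes h :: "real \<times> real \<Rightarrow> real"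
  assumes "k > 0" and "\<And>i. i < k \<Longrightarrow> h integrable_on Tsimp k i"
  shows "(h has_integral (\<Sum>i<k. integral (Tsimp k i) h)) (quadrant k)"
  unfolding quadrant_eq_Union_Tsimp[OF assms(1)]
proof (rule has_integral_UN)
  show "pairwise (\<lambda>i j. negligible (Tsimp k i \<inter> Tsimp k j)) {..<k}"
    unfolding pairwise_def by (metis Int_commute linorder_neqE_nat negligible_Tsimp_Int[OF assms(1)])
qed (use assms(2) in auto)

lemma measure_Tsimp_0:
  assumes "k \<ge> 1"
  shows "measure lebesgue (Tsimp k 0) = real k"
proof -
  define K where "K = real k"
  have "K \<ge> 1" using assms by (simp add: K_def)
  have T0: "p \<in> Tsimp k 0 \<longleftrightarrow> fst p + 2 * snd p \<le> 2 * K \<and> 0 \<le> fst p \<and> (K - 1) * fst p \<le> 2 * snd p" for p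
    using mem_Tsimp[of k p 0] assms \<open>K \<ge> 1\<close> by (auto simp: K_def algebra_simps zero_le_mult_iff)
  \<comment> \<open>\<open>T\<^sub>0\<close> and the triangle \<open>U\<close> below it tile the trapezoid \<open>box(0,0)(2,K-1) \<union> V\<close>, so that
      \<open>vol(T\<^sub>0) + (K - 1) = 2 (K - 1) + 1\<close>.\<close>
  define U where "U = cbox (0, 0) (2, K - 1) \<inter> {p. (-(K - 1)) * (2 * fst p - 0 - 2) + 2 * (2 * snd p - 0 - (K - 1)) \<le> 0}"
  define V where "V = cbox (0, K - 1) (2, K) \<inter> {p. 1 * (2 * fst p - 0 - 2) + 2 * (2 * snd p - (K - 1) - K) \<le> 0}"
  have "((\<lambda>_. 1::real) has_integral (2 * (K - 1))) (cbox (0, 0) (2::real, K - 1))"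
    using has_integral_const[of "1::real" "(0, 0)" "(2::real, K - 1)"] \<open>K \<ge> 1\<close> by (simp add: content_Pair)
  moreover have "((\<lambda>_. 1::real) has_integral 1) V"
    using has_integral_one_half_box[of 0 2 "K - 1" K 1 2] by (simp add: V_def)
  moreover have "negligible (cbox (0, 0) (2, K - 1) \<inter> V)"
    by (rule negligible_subset[OF negligible_line[of 0 1 "K - 1"]]) (auto simp: V_def cbox_Pair_eq)
  ultimately have trapezoid: "((\<lambda>_. 1::real) has_integral (2 * (K - 1) + 1)) (cbox (0, 0) (2, K - 1) \<union> V)"
    by (rule has_integral_Un)
  have "((\<lambda>_. 1::real) has_integral measure lebesgue (Tsimp k 0)) (Tsimp k 0)"
    unfolding Tsimp_def by (intro has_integral_one_measure lmeasurable_compact compact_convex_hull) auto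
  moreover have "((\<lambda>_. 1::real) has_integral ((2 - 0) * ((K - 1) - 0) / 2)) U"
    unfolding U_def by (rule has_integral_one_half_box) (use \<open>K \<ge> 1\<close> in auto)
  moreover have "negligible (Tsimp k 0 \<inter> U)"
    by (rule negligible_subset[OF negligible_line[of "K - 1" "-2" 0]])
      (auto simp: T0 U_def cbox_Pair_eq algebra_simps)
  ultimately have "((\<lambda>_. 1::real) has_integral (measure lebesgue (Tsimp k 0) + (2 - 0) * ((K - 1) - 0) / 2))
      (Tsimp k 0 \<union> U)"
    by (rule has_integral_Un)
  moreover have "Tsimp k 0 \<union> U = cbox (0, 0) (2, K - 1) \<union> V"
  proof (rule set_eqI)
    fix p :: "real \<times> real"
    obtain x y where p: "p = (x, y)" by (cases p)
    have "0 \<le> x \<Longrightarrow> 0 \<le> (K - 1) * x"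
      using \<open>K \<ge> 1\<close> by simp
    moreover have "x \<le> 2 \<Longrightarrow> (K - 1) * x \<le> (K - 1) * 2"
      using \<open>K \<ge> 1\<close> by (intro mult_left_mono) simp_all
    moreover have "2 < x \<Longrightarrow> 2 * K < (K - 1) * x + x"
      using \<open>K \<ge> 1\<close> by (simp add: algebra_simps)
    moreover have "p \<in> U \<longleftrightarrow> 0 \<le> x \<and> x \<le> 2 \<and> 0 \<le> y \<and> y \<le> K - 1 \<and> 2 * y \<le> (K - 1) * x"
      unfolding p U_def by (auto simp: cbox_Pair_eq algebra_simps)
    moreover have "p \<in> V \<longleftrightarrow> 0 \<le> x \<and> x \<le> 2 \<and> K - 1 \<le> y \<and> y \<le> K \<and> x + 2 * y \<le> 2 * K"
      unfolding p V_def by (auto simp: cbox_Pair_eq algebra_simps)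
    ultimately show "p \<in> Tsimp k 0 \<union> U \<longleftrightarrow> p \<in> cbox (0, 0) (2, K - 1) \<union> V"
      unfolding Un_iff p T0 by (auto simp: cbox_Pair_eq)
  qed
  ultimately have "measure lebesgue (Tsimp k 0) + (2 - 0) * ((K - 1) - 0) / 2 = 2 * (K - 1) + 1"
    using trapezoid by (metis has_integral_unique)
  then show ?thesis
    by (simp add: K_def field_simps)
qed

section \<open>Concavity and integrability of PL functions\<close>

lemma concave_on_Sup_slices:
  fixes G :: "('a::real_vector \<times> real) set"
  assumes "convex G" and "convex S"
    and nonempty: "\<And>x. x \<in> S \<Longrightarrow> \<exists>t. (x, t) \<in> G"
    and bdd: "\<And>x. bdd_above {t. (x, t) \<in> G}"
  shows "concave_on S (\<lambda>x. Sup {t. (x, t) \<in> G})"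
  unfolding concave_on_def
proof (rule convex_onI[OF _ \<open>convex S\<close>])
  fix u :: real and x y assume u: "0 < u" "u < 1" and "x \<in> S" "y \<in> S"
  define F where "F x = Sup {t. (x, t) \<in> G}" for x
  define z where "z = (1 - u) *\<^sub>R x + u *\<^sub>R y"
  have F_upper: "t \<le> F x" if "(x, t) \<in> G" for x t
    unfolding F_def using that bdd by (intro cSup_upper) auto
  have F_least: "F x \<le> c" if "x \<in> S" "\<And>t. (x, t) \<in> G \<Longrightarrow> t \<le> c" for x c
    unfolding F_def using that nonempty by (intro cSup_least) auto
  have combine: "(1 - u) * a + u * b \<le> F z" if "(x, a) \<in> G" "(y, b) \<in> G" for a b
  proof -
    have "(1 - u) *\<^sub>R (x, a) + u *\<^sub>R (y, b) \<in> G"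
      using convexD[OF \<open>convex G\<close> that] u by simp
    then show ?thesis unfolding z_def by (intro F_upper) simp
  qed
  have "(1 - u) * F x + u * b \<le> F z" if "(y, b) \<in> G" for b
  proof -
    have "F x \<le> (F z - u * b) / (1 - u)"
      using \<open>x \<in> S\<close> combine[OF _ that] u by (intro F_least) (simp_all add: field_simps)
    with u show ?thesis by (simp add: field_simps)
  qed
  then have "F y \<le> (F z - (1 - u) * F x) / u"
    using \<open>y \<in> S\<close> u by (intro F_least) (simp_all add: field_simps)
  with u show "- F ((1 - u) *\<^sub>R x + u *\<^sub>R y) \<le> (1 - u) * - F x + u * - F y"
    by (simp add: z_def field_simps)
qed

lemma graph_phi_snd_le_Max:
  assumes "finite (latt P)" and "(x, t) \<in> graph_phi P \<phi>"
  shows "t \<le> Max (\<phi> ` latt P)"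
proof -
  have "graph_phi P \<phi> \<subseteq> {z. ((0, 0), 1) \<bullet> z \<le> Max (\<phi> ` latt P)}"
    unfolding graph_phi_def
  proof (rule hull_minimal)
    show "(\<Union>p\<in>latt P. {(p, t) |t. t \<le> \<phi> p}) \<subseteq> {z. ((0, 0), 1) \<bullet> z \<le> Max (\<phi> ` latt P)}"
      using assms(1) by (force simp: inner_prod_def intro: Max_ge_iff[THEN iffD2])
  qed (rule convex_halfspace_le)
  with assms(2) show ?thesis by (auto simp: inner_prod_def)
qed

lemma graph_phi_Min:
  assumes "finite (latt P)" and "x \<in> convex hull (latt P)"
  shows "(x, Min (\<phi> ` latt P)) \<in> graph_phi P \<phi>"
proof -
  define m where "m = Min (\<phi> ` latt P)"
  have "convex {x. (x, m) \<in> graph_phi P \<phi>}"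
  proof (rule convexI)
    fix x y u v assume "x \<in> {x. (x, m) \<in> graph_phi P \<phi>}" "y \<in> {x. (x, m) \<in> graph_phi P \<phi>}"
      and "0 \<le> (u::real)" "0 \<le> v" "u + v = 1"
    then have "u *\<^sub>R (x, m) + v *\<^sub>R (y, m) \<in> graph_phi P \<phi>"
      unfolding graph_phi_def by (intro convexD) (simp_all add: convex_convex_hull)
    moreover have "u *\<^sub>R (x, m) + v *\<^sub>R (y, m) = (u *\<^sub>R x + v *\<^sub>R y, m)"
      using \<open>u + v = 1\<close> by (simp flip: distrib_right)
    ultimately show "u *\<^sub>R x + v *\<^sub>R y \<in> {x. (x, m) \<in> graph_phi P \<phi>}"
      by simp
  qed
  moreover have "latt P \<subseteq> {x. (x, m) \<in> graph_phi P \<phi>}"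
    unfolding graph_phi_def m_def using assms(1) by (auto intro!: hull_inc)
  ultimately have "convex hull (latt P) \<subseteq> {x. (x, m) \<in> graph_phi P \<phi>}"
    by (rule hull_minimal[rotated])
  with assms(2) show ?thesis by (auto simp: m_def)
qed

lemma ktri2_subset_convex_hull_latt: "ktri2 k \<subseteq> convex hull (latt (ktri2 k))"
proof -
  have "{(2 * real k, 0), (-2 * real k, 0), (0, real k), (0, - real k)} \<subseteq> latt (ktri2 k)"
    by (auto simp: latt_def ktri2_eq)
  then show ?thesis
    unfolding ktri2_eq_convex_hull[of k] by (rule hull_mono)
qed

lemma
  assumes "in_PL k g"
  shows in_PL_imp_bounded: "\<exists>C. \<forall>x\<in>ktri2 k. \<bar>g x\<bar> \<le> C"
    and in_PL_imp_concave_on: "concave_on (ktri2 k) g"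
proof -
  obtain \<phi> where g: "\<And>x. x \<in> ktri2 k \<Longrightarrow> g x = f_phi (ktri2 k) \<phi> x"
    using assms unfolding in_PL_def by blast
  let ?G = "graph_phi (ktri2 k) \<phi>"
  have Min: "(x, Min (\<phi> ` latt (ktri2 k))) \<in> ?G" if "x \<in> ktri2 k" for x
    using that ktri2_subset_convex_hull_latt by (intro graph_phi_Min finite_latt_ktri2) auto
  have Max: "t \<le> Max (\<phi> ` latt (ktri2 k))" if "(x, t) \<in> ?G" for x t
    using finite_latt_ktri2 that by (rule graph_phi_snd_le_Max)
  then have bdd: "bdd_above {t. (x, t) \<in> ?G}" for x
    by (intro bdd_aboveI[of _ "Max (\<phi> ` latt (ktri2 k))"]) blast
  have "Min (\<phi> ` latt (ktri2 k)) \<le> g x \<and> g x \<le> Max (\<phi> ` latt (ktri2 k))" if "x \<in> ktri2 k" for x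
    unfolding g[OF that] f_phi_def
  proof
    show "Min (\<phi> ` latt (ktri2 k)) \<le> Sup {t. (x, t) \<in> ?G}"
      using Min[OF that] by (intro cSup_upper[OF _ bdd]) simp
    show "Sup {t. (x, t) \<in> ?G} \<le> Max (\<phi> ` latt (ktri2 k))"
      using Min[OF that] Max by (intro cSup_least) blast+
  qed
  then show "\<exists>C. \<forall>x\<in>ktri2 k. \<bar>g x\<bar> \<le> C"
    by (intro exI[of _ "\<bar>Min (\<phi> ` latt (ktri2 k))\<bar> + \<bar>Max (\<phi> ` latt (ktri2 k))\<bar>"]) force
  have "concave_on (ktri2 k) (\<lambda>x. Sup {t. (x, t) \<in> ?G})"
    using Min bdd by (intro concave_on_Sup_slices convex_ktri2) (auto simp: graph_phi_def)
  then show "concave_on (ktri2 k) g"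
    unfolding concave_on_iff by (auto simp: g f_phi_def convexD[OF convex_ktri2])
qed

lemma integrable_on_convex_bounded:
  fixes g :: "'a::euclidean_space \<Rightarrow> real"
  assumes "convex S" and "bounded S" and "continuous_on (interior S) g" and "\<And>x. x \<in> S \<Longrightarrow> \<bar>g x\<bar> \<le> C"
  shows "g integrable_on S"
proof -
  have "interior S \<in> lmeasurable"
    using bounded_subset[OF \<open>bounded S\<close> interior_subset] by (intro lmeasurable_open) auto
  have "g integrable_on interior S"
  proof (rule measurable_bounded_by_integrable_imp_integrable)
    show "g \<in> borel_measurable (lebesgue_on (interior S))"
      using assms(3) \<open>interior S \<in> lmeasurable\<close>
      by (intro continuous_imp_measurable_on_sets_lebesgue) (auto dest: fmeasurableD)
    show "(\<lambda>_. C) integrable_on interior S"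
      using \<open>interior S \<in> lmeasurable\<close> by (rule integrable_on_const)
    show "norm (g x) \<le> C" if "x \<in> interior S" for x
      using assms(4) that interior_subset by auto
  qed (use \<open>interior S \<in> lmeasurable\<close> in \<open>auto dest: fmeasurableD\<close>)
  moreover have "S - interior S \<subseteq> frontier S"
    using closure_subset by (auto simp: frontier_def)
  then have "negligible (S - interior S)"
    using negligible_convex_frontier[OF \<open>convex S\<close>] negligible_subset by blast
  moreover have "(interior S - S) \<union> (S - interior S) = S - interior S"
    using interior_subset by blast
  ultimately show ?thesis
    using integrable_spike_set_eq[of "interior S" S g] by simp
qed

lemma integrable_on_PL:
  assumes "in_PL k g" and "convex S" and "S \<subseteq> ktri2 k"
  shows "g integrable_on S"
proof -
  have "convex_on (interior (ktri2 k)) (\<lambda>x. - g x)"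
    using in_PL_imp_concave_on[OF assms(1)] interior_subset unfolding concave_on_def
    by (rule convex_on_subset) (simp add: convex_interior convex_ktri2)
  then have "continuous_on (interior (ktri2 k)) g"
    using convex_on_continuous[OF open_interior] continuous_on_minus by fastforce
  then have "continuous_on (interior S) g"
    by (rule continuous_on_subset) (rule interior_mono[OF assms(3)])
  with in_PL_imp_bounded[OF assms(1)] assms(2,3) show ?thesis
    using bounded_subset[OF compact_imp_bounded[OF compact_ktri2] assms(3)]
    by (metis integrable_on_convex_bounded subsetD)
qed

section \<open>The averaging inequality\<close>

lemma integral_ktri2_eq_sum_Tsimp:
  assumes "k > 0" and "in_PL k g" and "W2_invariant k g"
  shows "integral (ktri2 k) g = 4 * (\<Sum>i<k. integral (Tsimp k i) g)"
proof -
  have "Tsimp k i \<subseteq> ktri2 k" if "i < k" for i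
    using that quadrant_eq_Union_Tsimp[OF assms(1)] by (auto simp: quadrant_def)
  then have "g integrable_on Tsimp k i" if "i < k" for i
    using that by (intro integrable_on_PL[OF assms(2)]) (simp_all add: Tsimp_def convex_convex_hull)
  then have "(g has_integral (\<Sum>i<k. integral (Tsimp k i) g)) (quadrant k)"
    by (rule has_integral_quadrant_sum_Tsimp[OF assms(1)])
  then show ?thesis
    by (intro integral_unique has_integral_ktri2_quadrant assms(3))
qed

lemma average_eq_if_const:
  assumes "k > 0" and "is_const_on (ktri2 k) g"
  shows "integral (ktri2 k) g / measure lebesgue (ktri2 k)
      = (\<Sum>p\<in>latt (ktri2 k). g p) / real (card (latt (ktri2 k)))"
proof -
  obtain c where c: "\<And>x. x \<in> ktri2 k \<Longrightarrow> g x = c"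
    using assms(2) unfolding is_const_on_def by blast
  have "(g has_integral (c * measure lebesgue (ktri2 k))) (ktri2 k)"
    using has_integral_mult_right[OF has_integral_one_measure[OF lmeasurable_compact[OF compact_ktri2]], of c]
    by (rule has_integral_eq[rotated]) (simp add: c)
  moreover have "(\<Sum>p\<in>latt (ktri2 k). g p) = c * real (card (latt (ktri2 k)))"
    by (simp add: c latt_def)
  moreover have "measure lebesgue (ktri2 k) > 0" "card (latt (ktri2 k)) > 0"
    using assms(1) by (simp_all add: measure_ktri2 card_latt_ktri2)
  ultimately show ?thesis
    by (simp add: integral_unique)
qed

lemma average_le_if_sandwiched:
  fixes S I B A N :: real
  assumes "0 < A" and "0 < N" and lower: "S - I \<le> B" and upper: "B \<le> (N - A) / A * I"
  shows "S / N \<le> I / A" and "S / N = I / A \<Longrightarrow> S - I = B"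
proof -
  have "I + (N - A) / A * I = N * (I / A)"
    using \<open>0 < A\<close> by (simp add: field_simps)
  with lower upper have "S \<le> N * (I / A)"
    by linarith
  with \<open>0 < N\<close> show "S / N \<le> I / A"
    by (simp add: divide_le_eq mult.commute)
  assume "S / N = I / A"
  with \<open>0 < N\<close> have "S = N * (I / A)"
    by (simp add: field_simps)
  with lower upper \<open>I + (N - A) / A * I = N * (I / A)\<close> show "S - I = B"
    by linarith
qed

theorem lemma4p1:
  fixes k :: nat and g \<delta> :: "real \<times> real \<Rightarrow> real"
  assumes hk: "k \<ge> 1"
    and h\<delta>: "(\<Sum>p\<in>latt (ktri2 k). \<delta> p) = 1"
    and hPL: "in_PL k g"
    and hW: "W2_invariant k g"
    and ha: "(\<Sum>p\<in>latt (ktri2 k). g p) - integral (ktri2 k) g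
               \<le> (1/2) * (\<Sum>p\<in>latt (frontier (ktri2 k)). g p) + (\<Sum>p\<in>latt (ktri2 k). \<delta> p * g p)"
    and ha_eq: "(\<Sum>p\<in>latt (ktri2 k). g p) - integral (ktri2 k) g
               = (1/2) * (\<Sum>p\<in>latt (frontier (ktri2 k)). g p) + (\<Sum>p\<in>latt (ktri2 k). \<delta> p * g p)
               \<Longrightarrow> is_const_on (ktri2 k) g"
    and hb: "(real (bcount k) + 2) * 4 / (2 * real (bcount k) * measure lebesgue (Tsimp k 0))
               * (\<Sum>i<k. integral (Tsimp k i) g)
             \<ge> (1/2) * (\<Sum>p\<in>latt (frontier (ktri2 k)). g p) + (\<Sum>p\<in>latt (ktri2 k). \<delta> p * g p)"
    and hb_eq: "(real (bcount k) + 2) * 4 / (2 * real (bcount k) * measure lebesgue (Tsimp k 0))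
               * (\<Sum>i<k. integral (Tsimp k i) g)
             = (1/2) * (\<Sum>p\<in>latt (frontier (ktri2 k)). g p) + (\<Sum>p\<in>latt (ktri2 k). \<delta> p * g p)
               \<Longrightarrow> is_const_on (ktri2 k) g"
  shows "integral (ktri2 k) g / measure lebesgue (ktri2 k)
           \<ge> (\<Sum>p\<in>latt (ktri2 k). g p) / real (card (latt (ktri2 k)))
         \<and> (integral (ktri2 k) g / measure lebesgue (ktri2 k)
             = (\<Sum>p\<in>latt (ktri2 k). g p) / real (card (latt (ktri2 k)))
            \<longleftrightarrow> is_const_on (ktri2 k) g)"
proof -
  define A N where "A = measure lebesgue (ktri2 k)" and "N = real (card (latt (ktri2 k)))"
  have "k > 0" using hk by simp
  have A: "A = 4 * (real k)\<^sup>2" and N: "N = 4 * (real k)\<^sup>2 + 2 * real k + 1"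
    by (simp_all add: A_def N_def measure_ktri2 card_latt_ktri2)
  have "(real (bcount k) + 2) * 4 / (2 * real (bcount k) * measure lebesgue (Tsimp k 0))
      * (\<Sum>i<k. integral (Tsimp k i) g) = (N - A) / A * integral (ktri2 k) g"
    using hk unfolding A N integral_ktri2_eq_sum_Tsimp[OF \<open>k > 0\<close> hPL hW]
    by (simp add: bcount_eq measure_Tsimp_0 field_simps power2_eq_square)
  with hb have upper: "(1/2) * (\<Sum>p\<in>latt (frontier (ktri2 k)). g p) + (\<Sum>p\<in>latt (ktri2 k). \<delta> p * g p)
      \<le> (N - A) / A * integral (ktri2 k) g"
    by simp
  have "0 < A" "0 < N"
    using hk unfolding A N by (simp, intro add_nonneg_pos) simp_all
  note sandwich = average_le_if_sandwiched[OF this ha upper]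
  show ?thesis
    unfolding A_def[symmetric] N_def[symmetric]
  proof (intro conjI iffI)
    show "(\<Sum>p\<in>latt (ktri2 k). g p) / N \<le> integral (ktri2 k) g / A"
      by (rule sandwich(1))
    show "is_const_on (ktri2 k) g" if "integral (ktri2 k) g / A = (\<Sum>p\<in>latt (ktri2 k). g p) / N"
      using sandwich(2) ha_eq that by simp
    show "integral (ktri2 k) g / A = (\<Sum>p\<in>latt (ktri2 k). g p) / N" if "is_const_on (ktri2 k) g"
      using average_eq_if_const[OF \<open>k > 0\<close> that] by (simp add: A_def N_def)
  qed
qed

end
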